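(* Let $G\in\mathfrak{Y}_n$. (1) Every proper subnormal subgroup of $G$ is abelian. (2) If $G$ is not perfect (i.e. $G'\neq G$), then $G$ is metabelian.
   Context: $\mathfrak{Y}_n$ denotes the class of all groups $G$ (finite or infinite) such that $N_G(A)=A$ for every non-abelian subgroup $A\le G$. A group is metabelian if its derived subgroup is abelian. *)

theory Defs
  imports "HOL-Algebra.Algebra"
begin

definition abelian_set :: "('a, 'b) monoid_scheme \<Rightarrow> 'a set \<Rightarrow> bool" where
  "abelian_set G A \<longleftrightarrow> (\<forall>x\<in>A. \<forall>y\<in>A. x \<otimes>\<^bsub>G\<^esub> y = y \<otimes>\<^bsub>G\<^esub> x)"

definition Yn_class :: "('a, 'b) monoid_scheme \<Rightarrow> bool" where
  "Yn_class G \<longleftrightarrow> group G \<and>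
     (\<forall>A. subgroup A G \<and> \<not> abelian_set G A \<longrightarrow> normalizer G A = A)"

inductive subnormal :: "('a, 'b) monoid_scheme \<Rightarrow> 'a set \<Rightarrow> bool" for G where
  subnormal_top: "subnormal G (carrier G)"
| subnormal_step: "subnormal G K \<Longrightarrow> normal H (G\<lparr>carrier := K\<rparr>) \<Longrightarrow> subnormal G H"

definition metabelian :: "('a, 'b) monoid_scheme \<Rightarrow> bool" where
  "metabelian G \<longleftrightarrow> abelian_set G (derived G (carrier G))"

end

theory Submission
  imports Defs
begin

text \<open>In a group of class Y_n
  a non-abelian \<open>H\<close> is its own normalizer, so a non-abelian normal subgroup of \<open>K\<close> is all
  of \<open>K\<close>. Walking down a subnormal series from \<open>G\<close>, the subgroups therefore stay equal to
  \<open>G\<close> until the first abelian one, after which everything is abelian. The derived subgroup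
  is normal, hence subnormal; if it is proper, it is abelian.\<close>

lemma (in group) normal_in_subgroup_imp_subgroup:
  assumes "subgroup K G" and "H \<lhd> G\<lparr>carrier := K\<rparr>"
  shows "subgroup H G"
  using assms incl_subgroup normal_imp_subgroup by blast

lemma (in group) normal_in_subgroup_imp_subset:
  assumes "H \<lhd> G\<lparr>carrier := K\<rparr>"
  shows "H \<subseteq> K"
  using subgroup.subset[OF normal_imp_subgroup[OF assms]] by simp

lemma (in group) normal_in_subgroup_imp_subset_normalizer:
  assumes K: "subgroup K G" and N: "H \<lhd> G\<lparr>carrier := K\<rparr>"
  shows "K \<subseteq> normalizer G H"
proof
  fix x assume "x \<in> K"
  then have x: "x \<in> carrier G" using K subgroup.subset by blast
  have H: "H \<subseteq> carrier G"
    using normal_in_subgroup_imp_subgroup[OF K N] subgroup.subset by blast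
  have "H #> x = x <# H"
    using normal.coset_eq[OF N] \<open>x \<in> K\<close> by (simp add: r_coset_def l_coset_def)
  then have "x <# H #> inv x = H #> x #> inv x"
    by simp
  also have "\<dots> = H"
    using x H by (simp add: coset_mult_assoc)
  finally have "x <# H #> inv x = H" .
  then show "x \<in> normalizer G H"
    unfolding normalizer_def stabilizer_def using x H by simp
qed

lemma (in group) subnormal_imp_subgroup:
  "subnormal G H \<Longrightarrow> subgroup H G"
  by (induction rule: subnormal.induct) (auto intro: subgroup_self normal_in_subgroup_imp_subgroup)

lemma (in group) normal_imp_subnormal:
  "H \<lhd> G \<Longrightarrow> subnormal G H"
  by (rule subnormal.subnormal_step[OF subnormal.subnormal_top]) simp

lemma Yn_class_imp_group:
  "Yn_class G \<Longrightarrow> group G"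
  unfolding Yn_class_def by blast

lemma Yn_class_subnormal_eq_carrier_or_abelian:
  assumes Y: "Yn_class G" and "subnormal G H"
  shows "H = carrier G \<or> abelian_set G H"
  using \<open>subnormal G H\<close>
proof (induction rule: subnormal.induct)
  case subnormal_top
  then show ?case by simp
next
  case (subnormal_step K H)
  interpret group G using Y by (rule Yn_class_imp_group)
  have K: "subgroup K G" using subnormal_step.hyps(1) by (rule subnormal_imp_subgroup)
  show ?case
  proof (cases "abelian_set G H")
    case False
    have "normalizer G H = H"
      using Y False normal_in_subgroup_imp_subgroup[OF K subnormal_step.hyps(2)]
      unfolding Yn_class_def by blast
    then have "H = K"
      using normal_in_subgroup_imp_subset[OF subnormal_step.hyps(2)]
        normal_in_subgroup_imp_subset_normalizer[OF K subnormal_step.hyps(2)] by blast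
    then show ?thesis using subnormal_step.IH False by simp
  qed simp
qed

theorem proposition2p2:
  fixes G :: "('a, 'b) monoid_scheme"
  assumes "Yn_class G"
  shows "(\<forall>H. subnormal G H \<and> H \<noteq> carrier G \<longrightarrow> abelian_set G H) \<and>
         (derived G (carrier G) \<noteq> carrier G \<longrightarrow> metabelian G)"
proof -
  interpret group G using assms by (rule Yn_class_imp_group)
  have proper_subnormal_abelian: "\<forall>H. subnormal G H \<and> H \<noteq> carrier G \<longrightarrow> abelian_set G H"
    using Yn_class_subnormal_eq_carrier_or_abelian[OF assms] by blast
  have "subnormal G (derived G (carrier G))"
    using derived_self_is_normal by (rule normal_imp_subnormal)
  with proper_subnormal_abelian show ?thesis
    unfolding metabelian_def by blast
qed

end
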